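(* For $\alpha>0$ set $$H_\alpha(t)=\frac\alpha2\operatorname{sinc}^2\!\left(\frac{\alpha t}{2}\right)+\frac\alpha4\left[\operatorname{sinc}^2\!\left(\frac{\alpha t-\pi}{2}\right)+\operatorname{sinc}^2\!\left(\frac{\alpha t+\pi}{2}\right)\right]$$ and $G_\alpha(x)=\frac1\pi\int_0^\infty H_\alpha(t)\cos(tx)\,dt$ for $x\ge0$. Then $G_\alpha$ is supported on $[0,\alpha]$, $G_\alpha(0)=1$, and $H_\alpha(t)\ge\frac{2\alpha}{\max((\alpha t)^2,\pi^2/3)}$ for all $t\in\mathbb{R}$.
   Context: $\operatorname{sinc}(x)=\frac{\sin x}{x}$ for $x\ne0$ and $\operatorname{sinc}(0)=1$. *)

theory Defs
  imports "HOL-Analysis.Analysis"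
begin

definition sinc :: "real \<Rightarrow> real" where
  "sinc x = (if x = 0 then 1 else sin x / x)"

definition H :: "real \<Rightarrow> real \<Rightarrow> real" where
  "H \<alpha> t = \<alpha> / 2 * (sinc (\<alpha> * t / 2))\<^sup>2
     + \<alpha> / 4 * ((sinc ((\<alpha> * t - pi) / 2))\<^sup>2 + (sinc ((\<alpha> * t + pi) / 2))\<^sup>2)"

definition G :: "real \<Rightarrow> real \<Rightarrow> real" where
  "G \<alpha> x = 1 / pi * integral {0..} (\<lambda>t. H \<alpha> t * cos (t * x))"

end

theory Submission
  imports Defs "HOL-Probability.Sinc_Integral"
begin

text \<open>
  With \<open>u = \<alpha>t/2\<close> and \<open>c = \<pi>/2\<close> the two shifted terms of \<open>H\<^sub>\<alpha>\<close> combine to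
  \<open>H\<^sub>\<alpha>(t) = \<alpha>/2 \<cdot> (sin\<^sup>2 u / u\<^sup>2 + cos\<^sup>2 u \<cdot> (u\<^sup>2 + c\<^sup>2) / (u\<^sup>2 - c\<^sup>2)\<^sup>2)\<close>.
  For \<open>3u\<^sup>2 \<ge> c\<^sup>2\<close> the last quotient is at least \<open>1/u\<^sup>2\<close>, which gives the bound
  \<open>\<alpha>/(2u\<^sup>2)\<close>; for smaller \<open>u\<close> the estimate \<open>sin u \<ge> u - u\<^sup>3/6\<close> reduces the bound
  \<open>6\<alpha>/\<pi>\<^sup>2\<close> to a polynomial inequality.

  For the Fourier transform, the kernel \<open>(1 - cos (k s)) / s\<^sup>2\<close> integrates to \<open>\<pi>|k|\<close> over the
  line (its primitive involves the sine integral), and \<open>sinc\<^sup>2(a s/2) cos (s x)\<close> is a second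
  difference of this kernel in \<open>k\<close>; so it integrates to the tent function
  \<open>\<pi> (|x + a| + |x - a| - 2|x|) / a\<^sup>2\<close>, which vanishes for \<open>|x| \<ge> |a|\<close>. A translation by \<open>c\<close>
  in \<open>t\<close> multiplies the cosine transform by \<open>cos (c x)\<close>, and \<open>H\<^sub>\<alpha>\<close> is even, so
  \<open>G\<^sub>\<alpha>(x) = \<alpha> (1 + cos (\<pi> x / \<alpha>)) tent(x) / (4\<pi>)\<close>.
\<close>

lemma sinc_altdef: "Defs.sinc = (\<lambda>x. if x = 0 then 1 else sin x / x)"
  by (simp add: fun_eq_iff Defs.sinc_def)

lemma sinc_nonzero: "x \<noteq> 0 \<Longrightarrow> Defs.sinc x = sin x / x"
  by (simp add: Defs.sinc_def)

lemma sinc_minus [simp]: "Defs.sinc (- x) = Defs.sinc x"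
  by (simp add: Defs.sinc_def)

lemma continuous_on_sinc_comp [continuous_intros]:
  "continuous_on S f \<Longrightarrow> continuous_on S (\<lambda>x. Defs.sinc (f x))"
  unfolding sinc_altdef by (rule continuous_on_sinc)


section \<open>The lower bound for \<open>H\<close>\<close>

lemma pi_squared_bounds: "9 \<le> pi\<^sup>2" "pi\<^sup>2 \<le> 16"
proof -
  have "3 * 3 \<le> pi * pi" using pi_gt3 by (intro mult_mono) auto
  then show "9 \<le> pi\<^sup>2" by (simp add: power2_eq_square)
  have "pi * pi \<le> 4 * 4" using pi_less_4 by (intro mult_mono) auto
  then show "pi\<^sup>2 \<le> 16" by (simp add: power2_eq_square)
qed

lemma sin_ge_cubic:
  assumes "0 \<le> x" "x \<le> pi"
  shows "x - x ^ 3 / 6 \<le> sin x"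
proof (cases "x = 0")
  case False
  then have "0 < x" using assms by simp
  from Maclaurin_sin_expansion4[OF this, of 4] obtain t where
    t: "0 < t" "t \<le> x" "sin x = (\<Sum>m<4. sin_coeff m * x ^ m) + sin (t + 2 * pi) / fact 4 * x ^ 4"
    by auto
  have "(\<Sum>m<4. sin_coeff m * x ^ m) = x - x ^ 3 / 6"
    by (simp add: lessThan_nat_numeral sin_coeff_def fact_numeral)
  moreover have "sin (t + 2 * pi) \<ge> 0" using t assms by (simp add: sin_ge_zero)
  ultimately show ?thesis using t(3) by simp
qed simp

lemma sin_sq_ge:
  fixes u :: real
  assumes "u\<^sup>2 \<le> 6"
  shows "u\<^sup>2 * (1 - u\<^sup>2 / 6)\<^sup>2 \<le> (sin u)\<^sup>2"
proof -
  have "\<bar>u\<bar>\<^sup>2 \<le> pi\<^sup>2" using assms pi_squared_bounds by simp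
  then have "\<bar>u\<bar> \<le> pi" by (rule power2_le_imp_le) simp
  then have lower: "\<bar>u\<bar> - \<bar>u\<bar> ^ 3 / 6 \<le> sin \<bar>u\<bar>" by (intro sin_ge_cubic) auto
  have "\<bar>u\<bar> * u\<^sup>2 \<le> \<bar>u\<bar> * 6" using assms by (intro mult_left_mono) auto
  then have "0 \<le> \<bar>u\<bar> - \<bar>u\<bar> ^ 3 / 6" by (simp add: power3_eq_cube power2_eq_square)
  then have "(\<bar>u\<bar> - \<bar>u\<bar> ^ 3 / 6)\<^sup>2 \<le> (sin \<bar>u\<bar>)\<^sup>2" using lower by (intro power_mono)
  moreover have "(\<bar>u\<bar> - \<bar>u\<bar> ^ 3 / 6)\<^sup>2 = u\<^sup>2 * (1 - u\<^sup>2 / 6)\<^sup>2"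
    by (simp add: power2_eq_square power3_eq_cube algebra_simps)
  moreover have "(sin \<bar>u\<bar>)\<^sup>2 = (sin u)\<^sup>2" by (cases "u \<ge> 0") auto
  ultimately show ?thesis by simp
qed

lemma sinc_sq_shifted_eq:
  fixes u :: real
  defines "c \<equiv> pi / 2"
  assumes "u \<noteq> 0" "u\<^sup>2 \<noteq> c\<^sup>2"
  shows "(Defs.sinc u)\<^sup>2 + ((Defs.sinc (u - c))\<^sup>2 + (Defs.sinc (u + c))\<^sup>2) / 2
    = (sin u)\<^sup>2 / u\<^sup>2 + (cos u)\<^sup>2 * ((u\<^sup>2 + c\<^sup>2) / (u\<^sup>2 - c\<^sup>2)\<^sup>2)"
proof -
  have "u - c \<noteq> 0" "u + c \<noteq> 0" using assms(3) by (auto simp: power2_eq_iff)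
  then have "Defs.sinc (u - c) = - cos u / (u - c)" "Defs.sinc (u + c) = cos u / (u + c)"
    by (simp_all add: sinc_nonzero c_def sin_diff sin_add)
  then have "((Defs.sinc (u - c))\<^sup>2 + (Defs.sinc (u + c))\<^sup>2) / 2
      = (cos u)\<^sup>2 * ((1 / (u - c)\<^sup>2 + 1 / (u + c)\<^sup>2) / 2)"
    by (simp add: field_simps)
  also have "1 / (u - c)\<^sup>2 + 1 / (u + c)\<^sup>2 = ((u + c)\<^sup>2 + (u - c)\<^sup>2) / ((u - c)\<^sup>2 * (u + c)\<^sup>2)"
    using \<open>u - c \<noteq> 0\<close> \<open>u + c \<noteq> 0\<close> by (simp add: field_simps)
  also have "(u + c)\<^sup>2 + (u - c)\<^sup>2 = 2 * (u\<^sup>2 + c\<^sup>2)"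
    by (simp add: power2_eq_square algebra_simps)
  also have "(u - c)\<^sup>2 * (u + c)\<^sup>2 = (u\<^sup>2 - c\<^sup>2)\<^sup>2"
    by (simp add: power2_eq_square algebra_simps)
  finally have "((Defs.sinc (u - c))\<^sup>2 + (Defs.sinc (u + c))\<^sup>2) / 2
      = (cos u)\<^sup>2 * ((u\<^sup>2 + c\<^sup>2) / (u\<^sup>2 - c\<^sup>2)\<^sup>2)"
    by (simp del: distrib_left_numeral)
  then show ?thesis
    using assms(2) by (simp add: sinc_nonzero power_divide)
qed

lemma inverse_sq_le_shifted_quotient:
  fixes u c :: real
  assumes "c\<^sup>2 \<le> 3 * u\<^sup>2" "u\<^sup>2 \<noteq> c\<^sup>2"
  shows "1 / u\<^sup>2 \<le> (u\<^sup>2 + c\<^sup>2) / (u\<^sup>2 - c\<^sup>2)\<^sup>2"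
proof -
  have "u\<^sup>2 > 0" using assms by (cases "u = 0") auto
  moreover have "(u\<^sup>2 - c\<^sup>2)\<^sup>2 > 0" using assms by simp
  moreover have "c\<^sup>2 * c\<^sup>2 \<le> 3 * u\<^sup>2 * c\<^sup>2" using assms by (intro mult_right_mono) auto
  then have "(u\<^sup>2 - c\<^sup>2)\<^sup>2 \<le> u\<^sup>2 * (u\<^sup>2 + c\<^sup>2)" by (simp add: power2_eq_square algebra_simps)
  ultimately show ?thesis by (simp add: divide_simps) (simp add: algebra_simps)
qed

text \<open>The case \<open>3 u\<^sup>2 \<le> (\<pi>/2)\<^sup>2\<close> of the lower bound, with \<open>v = u\<^sup>2\<close>, \<open>W = (\<pi>/2)\<^sup>2\<close>
  and \<open>s = sin\<^sup>2 u\<close>.\<close>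

lemma small_argument_estimate:
  fixes v W s :: real
  assumes v: "0 < v" "3 * v \<le> W" and W: "9/4 \<le> W" "W \<le> 4"
    and s: "v * (1 - v/6)\<^sup>2 \<le> s"
  shows "3 / W \<le> s / v + (1 - s) * ((v + W) / (W - v)\<^sup>2)"
proof -
  define g where "g = (v + W) / (W - v)\<^sup>2"
  have "W - v > 0" using v W by linarith
  then have nz: "(W - v)\<^sup>2 \<noteq> 0" by simp
  have g_diff: "1 / v - g = W * (W - 3 * v) / (v * (W - v)\<^sup>2)"
  proof -
    have "1 / v - g = ((W - v)\<^sup>2 - v * (v + W)) / (v * (W - v)\<^sup>2)"
      using nz v unfolding g_def by (simp add: field_simps)
    also have "(W - v)\<^sup>2 - v * (v + W) = W * (W - 3 * v)"
      by (simp add: power2_eq_square algebra_simps)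
    finally show ?thesis .
  qed
  have "1 / v - g \<ge> 0"
    unfolding g_diff using v W by (intro divide_nonneg_pos mult_nonneg_nonneg) auto
  then have "g + v * (1 - v/6)\<^sup>2 * (1 / v - g) \<le> g + s * (1 / v - g)"
    using mult_right_mono[OF s] by simp
  also have "\<dots> = s / v + (1 - s) * g" by (simp add: field_simps)
  finally have "g + v * (1 - v/6)\<^sup>2 * (1 / v - g) \<le> s / v + (1 - s) * g" .
  moreover have "g + v * (1 - v/6)\<^sup>2 * (1 / v - g)
      = (v + W + (1 - v/6)\<^sup>2 * W * (W - 3 * v)) / (W - v)\<^sup>2"
    unfolding g_diff using v nz by (simp add: g_def field_simps)
  moreover have "W\<^sup>2 * (1 - v/6)\<^sup>2 - 2 * W + v \<ge> 0"
  proof -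
    have "(1 - v/6)\<^sup>2 \<ge> 1 - v/3" by (simp add: power2_eq_square algebra_simps)
    then have "W\<^sup>2 * (1 - v/6)\<^sup>2 \<ge> W\<^sup>2 * (1 - v/3)" by (intro mult_left_mono) auto
    moreover have "(9/4) * (9/4) \<le> W * W" using W by (intro mult_mono) auto
    then have "v * (1 - W\<^sup>2/3) \<ge> (W/3) * (1 - W\<^sup>2/3)"
      using v by (intro mult_right_mono_neg) (auto simp: power2_eq_square)
    moreover have "W\<^sup>2 - 2 * W + (W/3) * (1 - W\<^sup>2/3) = W * ((W - 9/4) * (4 - W) / 9 + (11 * W / 36 - 2/3))"
      by (simp add: field_simps power2_eq_square)
    moreover have "0 \<le> W * ((W - 9/4) * (4 - W) / 9 + (11 * W / 36 - 2/3))"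
      using W by (intro mult_nonneg_nonneg add_nonneg_nonneg) auto
    moreover have "W\<^sup>2 * (1 - v/3) - 2 * W + v = W\<^sup>2 - 2 * W + v * (1 - W\<^sup>2/3)"
      by (simp add: algebra_simps)
    ultimately show ?thesis by linarith
  qed
  then have "3 * (W - v)\<^sup>2 \<le> W * (v + W + (1 - v/6)\<^sup>2 * W * (W - 3 * v))"
    using v mult_nonneg_nonneg[of "W - 3 * v" "W\<^sup>2 * (1 - v/6)\<^sup>2 - 2 * W + v"]
    by (simp add: algebra_simps power2_eq_square)
  then have "3 / W \<le> (v + W + (1 - v/6)\<^sup>2 * W * (W - 3 * v)) / (W - v)\<^sup>2"
    using nz W by (simp add: divide_simps) (simp add: algebra_simps)
  ultimately show ?thesis unfolding g_def by linarith
qed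

lemma sinc_sq_shifted_lower_bound:
  fixes u :: real
  shows "4 / max (4 * u\<^sup>2) (pi\<^sup>2 / 3)
    \<le> (Defs.sinc u)\<^sup>2 + ((Defs.sinc (u - pi / 2))\<^sup>2 + (Defs.sinc (u + pi / 2))\<^sup>2) / 2"
    (is "_ \<le> ?B")
proof -
  define c where "c = pi / 2"
  have c2: "c\<^sup>2 = pi\<^sup>2 / 4" by (simp add: c_def power_divide)
  have "0 \<le> ((Defs.sinc (u - pi / 2))\<^sup>2 + (Defs.sinc (u + pi / 2))\<^sup>2) / 2" by simp
  then have B_ge: "(Defs.sinc u)\<^sup>2 \<le> ?B" by linarith
  consider "u = 0" | "u\<^sup>2 = c\<^sup>2" | "u \<noteq> 0" "u\<^sup>2 \<noteq> c\<^sup>2" by blast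
  then show ?thesis
  proof cases
    case 1
    have "4 / (pi\<^sup>2 / 3) \<le> 1 + ((2 / pi)\<^sup>2 + (2 / pi)\<^sup>2) / 2"
      using pi_squared_bounds by (simp add: field_simps power2_eq_square)
    then show ?thesis using 1 by (simp add: Defs.sinc_def)
  next
    case 2
    then have "u = c \<or> u = - c" by (simp add: power2_eq_iff)
    then have "(sin u)\<^sup>2 = 1" unfolding c_def by (metis power2_minus sin_minus sin_pi_half one_power2)
    then have "(Defs.sinc u)\<^sup>2 = 1 / u\<^sup>2" using 2 by (auto simp: Defs.sinc_def power_divide c_def)
    moreover have "4 / max (4 * u\<^sup>2) (pi\<^sup>2 / 3) \<le> 4 / (4 * u\<^sup>2)"
      using 2 by (intro divide_left_mono) (auto simp: c_def less_max_iff_disj)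
    moreover have "4 / (4 * u\<^sup>2) = 1 / u\<^sup>2" by simp
    ultimately show ?thesis using B_ge by linarith
  next
    case 3
    define q where "q = (u\<^sup>2 + c\<^sup>2) / (u\<^sup>2 - c\<^sup>2)\<^sup>2"
    have B_eq: "?B = (sin u)\<^sup>2 / u\<^sup>2 + (cos u)\<^sup>2 * q"
      using sinc_sq_shifted_eq[of u] 3 by (simp add: c_def q_def)
    show ?thesis
    proof (cases "c\<^sup>2 \<le> 3 * u\<^sup>2")
      case True
      have "(cos u)\<^sup>2 * (1 / u\<^sup>2) \<le> (cos u)\<^sup>2 * q"
        unfolding q_def using True 3 by (intro mult_left_mono inverse_sq_le_shifted_quotient) auto
      moreover have "(sin u)\<^sup>2 / u\<^sup>2 + (cos u)\<^sup>2 * (1 / u\<^sup>2) = 1 / u\<^sup>2"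
        by (simp add: add_divide_distrib[symmetric])
      moreover have "max (4 * u\<^sup>2) (pi\<^sup>2 / 3) = 4 * u\<^sup>2" using True c2 by simp
      ultimately show ?thesis unfolding B_eq by simp
    next
      case False
      have "u\<^sup>2 \<le> 6" "c\<^sup>2 \<le> 4" "9/4 \<le> c\<^sup>2" using False c2 pi_squared_bounds by auto
      then have "3 / c\<^sup>2 \<le> (sin u)\<^sup>2 / u\<^sup>2 + (1 - (sin u)\<^sup>2) * ((u\<^sup>2 + c\<^sup>2) / (c\<^sup>2 - u\<^sup>2)\<^sup>2)"
        using False 3 sin_sq_ge[of u] by (intro small_argument_estimate) auto
      also have "\<dots> = ?B"
        unfolding B_eq q_def by (simp add: power2_commute cos_squared_eq)
      also have "3 / c\<^sup>2 = 4 / max (4 * u\<^sup>2) (pi\<^sup>2 / 3)" using False by (simp add: c2)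
      finally show ?thesis .
    qed
  qed
qed

lemma H_lower_bound:
  fixes \<alpha> t :: real
  assumes "\<alpha> > 0"
  shows "H \<alpha> t \<ge> 2 * \<alpha> / max ((\<alpha> * t)\<^sup>2) (pi\<^sup>2 / 3)"
proof -
  define u where "u = \<alpha> * t / 2"
  have "(\<alpha> * t - pi) / 2 = u - pi / 2" "(\<alpha> * t + pi) / 2 = u + pi / 2" "(\<alpha> * t)\<^sup>2 = 4 * u\<^sup>2"
    unfolding u_def by (simp_all add: field_simps power2_eq_square)
  note u_eqs = this
  have H_eq: "H \<alpha> t = \<alpha> / 2 * ((Defs.sinc u)\<^sup>2
      + ((Defs.sinc (u - pi / 2))\<^sup>2 + (Defs.sinc (u + pi / 2))\<^sup>2) / 2)"
    unfolding H_def u_def[symmetric] u_eqs by (simp add: field_simps)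
  have "2 * \<alpha> / max ((\<alpha> * t)\<^sup>2) (pi\<^sup>2 / 3) = \<alpha> / 2 * (4 / max (4 * u\<^sup>2) (pi\<^sup>2 / 3))"
    unfolding u_eqs by simp
  also have "\<alpha> / 2 * (4 / max (4 * u\<^sup>2) (pi\<^sup>2 / 3)) \<le> H \<alpha> t"
    unfolding H_eq using assms by (intro mult_left_mono sinc_sq_shifted_lower_bound) simp
  finally show ?thesis .
qed

lemma has_bochner_integral_lborel_shift:
  fixes f :: "real \<Rightarrow> 'a::{banach, second_countable_topology}"
  assumes "has_bochner_integral lborel f I"
  shows "has_bochner_integral lborel (\<lambda>x. f (x + c)) I"
  using assms lborel_has_bochner_integral_real_affine_iff[of 1 f I c] by (simp add: add.commute)

lemma has_bochner_integral_lborel_reflect: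
  fixes f :: "real \<Rightarrow> 'a::{banach, second_countable_topology}"
  assumes "has_bochner_integral lborel f I"
  shows "has_bochner_integral lborel (\<lambda>x. f (- x)) I"
  using assms lborel_has_bochner_integral_real_affine_iff[of "-1" f I 0] by simp

lemma has_bochner_integral_lborel_odd:
  fixes f :: "real \<Rightarrow> real"
  assumes "integrable lborel f" "\<And>x. f (- x) = - f x"
  shows "has_bochner_integral lborel f 0"
proof -
  have "has_bochner_integral lborel (\<lambda>x. f (- x)) (integral\<^sup>L lborel f)"
    using assms(1) by (intro has_bochner_integral_lborel_reflect) (simp add: has_bochner_integral_iff)
  then have "integral\<^sup>L lborel f = - integral\<^sup>L lborel f"
    by (simp add: assms(2) has_bochner_integral_iff)
  then show ?thesis using assms(1) by (simp add: has_bochner_integral_iff)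
qed

lemma even_eq_halfline_parts:
  fixes f :: "real \<Rightarrow> real"
  assumes "\<And>x. f (- x) = f x"
  shows "AE x in lborel. f x = f x * indicator {0..} x + f (- x) * indicator {0..} (- x)"
  using AE_lborel_singleton[of 0] by eventually_elim (auto simp: indicator_def assms)

lemma has_bochner_integral_even_nonneg:
  fixes f :: "real \<Rightarrow> real"
  assumes f_meas: "f \<in> borel_measurable borel" and even: "\<And>x. f (- x) = f x"
    and nonneg: "\<And>x. f x \<ge> 0" and half: "(f has_integral I) {0..}"
  shows "has_bochner_integral lborel f (2 * I)"
proof -
  define g where "g x = f x * indicator {0..} x" for x
  have g_meas: "g \<in> borel_measurable borel" unfolding g_def using f_meas by measurable
  have g_restrict: "g = (\<lambda>x. if x \<in> {0..} then f x else 0)"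
    by (auto simp: g_def fun_eq_iff)
  have g_hi: "(g has_integral I) UNIV"
    unfolding g_restrict has_integral_restrict_UNIV by (rule half)
  have g_nn_integral: "integral\<^sup>N lborel g = I"
    by (rule nn_integral_has_integral_lborel[OF g_meas _ g_hi]) (simp add: g_def nonneg)
  have g_int: "integrable lborel g"
  proof (rule integrableI_nn_integral_finite[OF _ _ g_nn_integral])
    show "g \<in> borel_measurable lborel" using g_meas by simp
    show "AE x in lborel. 0 \<le> g x" by (simp add: g_def nonneg)
  qed
  then have "has_bochner_integral lborel g I"
    using g_hi has_integral_integral_lborel has_integral_unique
    by (metis has_bochner_integral_iff)
  then have sum: "has_bochner_integral lborel (\<lambda>x. g x + g (- x)) (I + I)"
    by (intro has_bochner_integral_add has_bochner_integral_lborel_reflect)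
  have "AE x in lborel. g x + g (- x) = f x"
    using even_eq_halfline_parts[of f, OF even] by eventually_elim (simp add: g_def)
  moreover have "f \<in> borel_measurable lborel" using f_meas by simp
  ultimately have "has_bochner_integral lborel f (I + I)"
    using sum has_bochner_integral_cong_AE[OF borel_measurable_has_bochner_integral[OF sum]] by blast
  then show ?thesis by (simp only: mult_2)
qed

lemma has_integral_halfline_even:
  fixes f :: "real \<Rightarrow> real"
  assumes even: "\<And>x. f (- x) = f x" and full: "has_bochner_integral lborel f I"
  shows "(f has_integral I / 2) {0..}"
proof -
  define g where "g x = f x * indicator {0..} x" for x
  have g_int: "integrable lborel g"
    unfolding g_def using full
    by (intro integrable_real_mult_indicator) (auto simp: has_bochner_integral_iff)
  have g_restrict: "g = (\<lambda>x. if x \<in> {0..} then f x else 0)"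
    by (auto simp: g_def fun_eq_iff)
  from g_int have "has_bochner_integral lborel g (integral\<^sup>L lborel g)"
    by (rule has_bochner_integral_integrable)
  then have sum: "has_bochner_integral lborel (\<lambda>x. g x + g (- x))
      (integral\<^sup>L lborel g + integral\<^sup>L lborel g)"
    by (intro has_bochner_integral_add has_bochner_integral_lborel_reflect)
  have "AE x in lborel. g x + g (- x) = f x"
    using even_eq_halfline_parts[of f, OF even] by eventually_elim (simp add: g_def)
  then have "integral\<^sup>L lborel g + integral\<^sup>L lborel g = I"
    by (rule has_bochner_integral_eq_AE[OF sum full])
  then have "integral\<^sup>L lborel g = I / 2" by simp
  with has_integral_integral_lborel[OF g_int] have "(g has_integral I / 2) UNIV" by simp
  then show ?thesis unfolding g_restrict has_integral_restrict_UNIV .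
qed

section \<open>The Fourier transform of \<open>H\<close>\<close>

definition fejer_kernel :: "real \<Rightarrow> real \<Rightarrow> real" where
  "fejer_kernel k s = k\<^sup>2 / 2 * (Defs.sinc (k * s / 2))\<^sup>2"

lemma fejer_kernel_eq:
  assumes "s \<noteq> 0"
  shows "fejer_kernel k s = (1 - cos (k * s)) / s\<^sup>2"
proof (cases "k = 0")
  case False
  have "cos (k * s) = 1 - 2 * (sin (k * s / 2))\<^sup>2"
    using cos_double_sin[of "k * s / 2"] by simp
  then show ?thesis
    using False assms by (simp add: fejer_kernel_def sinc_nonzero field_simps)
qed (simp add: fejer_kernel_def)

lemma fejer_kernel_0 [simp]: "fejer_kernel k 0 = k\<^sup>2 / 2"
  by (simp add: fejer_kernel_def Defs.sinc_def)

lemma fejer_kernel_nonneg: "fejer_kernel k s \<ge> 0"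
  by (simp add: fejer_kernel_def)

lemma fejer_kernel_minus [simp]:
  "fejer_kernel k (- s) = fejer_kernel k s" "fejer_kernel (- k) s = fejer_kernel k s"
  by (simp_all add: fejer_kernel_def)

lemma continuous_on_fejer_kernel [continuous_intros]: "continuous_on S (fejer_kernel k)"
  unfolding fejer_kernel_def by (intro continuous_intros) auto

lemma has_real_derivative_fejer_primitive:
  assumes "y > 0"
  shows "((\<lambda>y. k * Si (k * y) - y * fejer_kernel k y) has_real_derivative fejer_kernel k y) (at y)"
proof -
  let ?G = "\<lambda>y. k * Si (k * y) - (1 - cos (k * y)) / y"
  have "((\<lambda>y. Si (k * y)) has_real_derivative Sinc_Integral.sinc (k * y) * k) (at y)"
    by (rule DERIV_chain2[OF DERIV_Si]) (auto intro!: derivative_eq_intros)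
  moreover have "((\<lambda>y. (1 - cos (k * y)) / y) has_real_derivative
      (k * sin (k * y) * y - (1 - cos (k * y))) / (y * y)) (at y)"
    using assms by (auto intro!: derivative_eq_intros)
  ultimately have "(?G has_real_derivative
      k * (Sinc_Integral.sinc (k * y) * k) - (k * sin (k * y) * y - (1 - cos (k * y))) / (y * y)) (at y)"
    by (intro DERIV_diff DERIV_cmult)
  moreover have "k * (Sinc_Integral.sinc (k * y) * k) - (k * sin (k * y) * y - (1 - cos (k * y))) / (y * y)
      = fejer_kernel k y"
    using assms by (auto simp: fejer_kernel_eq power2_eq_square field_simps)
  ultimately have "(?G has_real_derivative fejer_kernel k y) (at y)" by simp
  then show ?thesis
  proof (rule has_field_derivative_transform_within_open[where S = "{0<..}"])
    show "?G z = k * Si (k * z) - z * fejer_kernel k z" if "z \<in> {0<..}" for z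
      using that by (simp add: fejer_kernel_eq power2_eq_square)
  qed (use assms in auto)
qed

lemma tendsto_fejer_primitive:
  assumes "k > 0"
  shows "((\<lambda>y. k * Si (k * y) - y * fejer_kernel k y) \<longlongrightarrow> pi * k / 2) at_top"
proof -
  have "filterlim (\<lambda>y. k * y) at_top at_top"
    by (rule filterlim_tendsto_pos_mult_at_top[OF tendsto_const assms filterlim_ident])
  then have Si_lim: "((\<lambda>y. k * Si (k * y)) \<longlongrightarrow> k * (pi / 2)) at_top"
    by (intro tendsto_mult_left filterlim_compose[OF Si_at_top])
  have fejer_lim: "((\<lambda>y. y * fejer_kernel k y) \<longlongrightarrow> 0) at_top"
  proof (rule Lim_null_comparison)
    show "\<forall>\<^sub>F y in at_top. norm (y * fejer_kernel k y) \<le> 2 / y"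
    proof (rule eventually_mono[OF eventually_gt_at_top[of 0]])
      fix y :: real
      assume "0 < y"
      moreover have "\<bar>1 - cos (k * y)\<bar> \<le> 2" by (smt (verit) cos_ge_minus_one cos_le_one)
      ultimately show "norm (y * fejer_kernel k y) \<le> 2 / y"
        by (simp add: fejer_kernel_eq power2_eq_square abs_div divide_right_mono)
    qed
    show "((\<lambda>y::real. 2 / y) \<longlongrightarrow> 0) at_top"
      by (intro tendsto_divide_0[OF tendsto_const] filterlim_at_top_imp_at_infinity filterlim_ident)
  qed
  from tendsto_diff[OF Si_lim fejer_lim] show ?thesis by (simp add: mult.commute)
qed

lemma has_integral_fejer_kernel_halfline: "(fejer_kernel k has_integral pi * \<bar>k\<bar> / 2) {0..}"
proof -
  have pos: "(fejer_kernel k has_integral pi * k / 2) {0..}" if "k > 0" for k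
  proof (rule has_integral_to_inf)
    define F where "F y = k * Si (k * y) - y * fejer_kernel k y" for y
    have "continuous_on S (\<lambda>y. Si (k * y))" for S
      by (intro continuous_at_imp_continuous_on ballI isCont_o2[OF _ isCont_Si] continuous_intros)
    then have "continuous_on S F" for S
      unfolding F_def by (intro continuous_intros)
    then have "(fejer_kernel k has_integral F y - F 0) {0..y}" if "y \<ge> 0" for y
      using that has_real_derivative_fejer_primitive
      by (intro fundamental_theorem_of_calculus_interior)
        (auto simp: F_def has_real_derivative_iff_has_vector_derivative[symmetric])
    moreover have "F 0 = 0" by (simp add: F_def Si_def zero_ereal_def[symmetric])
    ultimately have F_eq: "integral {0..y} (fejer_kernel k) = F y" if "y \<ge> 0" for y
      using that by (simp add: integral_unique)
    show "((\<lambda>y. integral {0..y} (fejer_kernel k)) \<longlongrightarrow> pi * k / 2) at_top"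
      using tendsto_fejer_primitive[OF \<open>k > 0\<close>] unfolding F_def[symmetric]
      by (rule Lim_transform_eventually)
        (auto intro: eventually_mono[OF eventually_ge_at_top[of 0]] simp: F_eq)
    show "fejer_kernel k integrable_on {0..y}" for y
      by (intro integrable_continuous_real continuous_on_fejer_kernel)
    show "0 \<le> fejer_kernel k y" for y by (rule fejer_kernel_nonneg)
  qed
  consider "k = 0" | "k > 0" | "k < 0" by linarith
  then show ?thesis
  proof cases
    case 1
    then have "fejer_kernel k = (\<lambda>_. 0)" by (simp add: fejer_kernel_def fun_eq_iff)
    then show ?thesis using 1 by simp
  next
    case 3
    moreover have "fejer_kernel (- k) = fejer_kernel k" by (simp add: fun_eq_iff)
    ultimately show ?thesis using pos[of "- k"] by simp
  qed (use pos in simp)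
qed

lemma has_bochner_integral_fejer_kernel: "has_bochner_integral lborel (fejer_kernel k) (pi * \<bar>k\<bar>)"
  using has_bochner_integral_even_nonneg[OF _ _ fejer_kernel_nonneg has_integral_fejer_kernel_halfline]
  by (simp add: borel_measurable_continuous_onI continuous_on_fejer_kernel)

text \<open>For \<open>a > 0\<close> this is \<open>2\<pi>/a \<cdot> max 0 (1 - |x|/a)\<close>.\<close>

definition tent :: "real \<Rightarrow> real \<Rightarrow> real" where
  "tent a x = pi / a\<^sup>2 * (\<bar>x + a\<bar> + \<bar>x - a\<bar> - 2 * \<bar>x\<bar>)"

lemma tent_eq_0: "\<bar>a\<bar> \<le> \<bar>x\<bar> \<Longrightarrow> tent a x = 0"
  unfolding tent_def by (cases "x \<ge> 0") auto

lemma tent_at_0: "a \<noteq> 0 \<Longrightarrow> tent a 0 = 2 * pi / \<bar>a\<bar>"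
  by (simp add: tent_def power2_eq_square field_simps)

lemma sinc_sq_cos_eq_fejer:
  assumes "a \<noteq> 0"
  shows "(Defs.sinc (a * s / 2))\<^sup>2 * cos (s * x)
    = (fejer_kernel (x + a) s + fejer_kernel (x - a) s - 2 * fejer_kernel x s) / a\<^sup>2"
proof (cases "s = 0")
  case True
  then show ?thesis using assms by (simp add: Defs.sinc_def power2_eq_square field_simps)
next
  case False
  have "(x + a) * s = s * x + a * s" "(x - a) * s = s * x - a * s"
    by (simp_all add: algebra_simps)
  then have "cos ((x + a) * s) + cos ((x - a) * s) = 2 * cos (s * x) * cos (a * s)"
    by (simp only: cos_add cos_diff)
  moreover have "cos (a * s) = 1 - 2 * (sin (a * s / 2))\<^sup>2"
    using cos_double_sin[of "a * s / 2"] by simp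
  ultimately have "(1 - cos ((x + a) * s)) + (1 - cos ((x - a) * s)) - 2 * (1 - cos (x * s))
      = 4 * cos (s * x) * (sin (a * s / 2))\<^sup>2"
    by (simp add: mult.commute[of x s] algebra_simps)
  then show ?thesis
    using assms False
    by (simp add: fejer_kernel_eq sinc_nonzero diff_divide_distrib[symmetric]
        add_divide_distrib[symmetric] field_simps)
qed

lemma has_bochner_integral_sinc_sq_cos:
  assumes "a \<noteq> 0"
  shows "has_bochner_integral lborel (\<lambda>s. (Defs.sinc (a * s / 2))\<^sup>2 * cos (s * x)) (tent a x)"
proof -
  have "has_bochner_integral lborel
      (\<lambda>s. (fejer_kernel (x + a) s + fejer_kernel (x - a) s - 2 * fejer_kernel x s) / a\<^sup>2)
      ((pi * \<bar>x + a\<bar> + pi * \<bar>x - a\<bar> - 2 * (pi * \<bar>x\<bar>)) / a\<^sup>2)"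
    by (intro has_bochner_integral_divide_zero has_bochner_integral_diff has_bochner_integral_add
        has_bochner_integral_mult_right has_bochner_integral_fejer_kernel)
  moreover have "(pi * \<bar>x + a\<bar> + pi * \<bar>x - a\<bar> - 2 * (pi * \<bar>x\<bar>)) / a\<^sup>2 = tent a x"
    using assms by (simp add: tent_def field_simps)
  ultimately show ?thesis using sinc_sq_cos_eq_fejer[OF assms] by simp
qed

lemma has_bochner_integral_sinc_sq_sin:
  assumes "a \<noteq> 0"
  shows "has_bochner_integral lborel (\<lambda>s. (Defs.sinc (a * s / 2))\<^sup>2 * sin (s * x)) 0"
proof (rule has_bochner_integral_lborel_odd)
  have "integrable lborel (\<lambda>s. (Defs.sinc (a * s / 2))\<^sup>2)"
    using has_bochner_integral_sinc_sq_cos[OF assms, of 0] by (simp add: has_bochner_integral_iff)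
  then show "integrable lborel (\<lambda>s. (Defs.sinc (a * s / 2))\<^sup>2 * sin (s * x))"
  proof (rule Bochner_Integration.integrable_bound)
    show "(\<lambda>s. (Defs.sinc (a * s / 2))\<^sup>2 * sin (s * x)) \<in> borel_measurable lborel"
      unfolding measurable_lborel2 by (intro borel_measurable_continuous_onI continuous_intros) auto
    show "AE s in lborel. norm ((Defs.sinc (a * s / 2))\<^sup>2 * sin (s * x)) \<le> norm ((Defs.sinc (a * s / 2))\<^sup>2)"
      by (simp add: abs_mult mult_left_le)
  qed
qed simp

lemma has_bochner_integral_sinc_sq_shift_cos:
  assumes "a \<noteq> 0"
  shows "has_bochner_integral lborel (\<lambda>t. (Defs.sinc (a * (t + c) / 2))\<^sup>2 * cos (t * x))
    (cos (c * x) * tent a x)"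
proof -
  define g where "g s = cos (c * x) * ((Defs.sinc (a * s / 2))\<^sup>2 * cos (s * x))
    + sin (c * x) * ((Defs.sinc (a * s / 2))\<^sup>2 * sin (s * x))" for s
  have "has_bochner_integral lborel g (cos (c * x) * tent a x + sin (c * x) * 0)"
    unfolding g_def
    by (intro has_bochner_integral_add has_bochner_integral_mult_right
        has_bochner_integral_sinc_sq_cos has_bochner_integral_sinc_sq_sin assms)
  then have "has_bochner_integral lborel (\<lambda>t. g (t + c)) (cos (c * x) * tent a x)"
    by (simp add: has_bochner_integral_lborel_shift)
  moreover have "g (t + c) = (Defs.sinc (a * (t + c) / 2))\<^sup>2 * cos (t * x)" for t
  proof -
    have "cos (t * x) = cos ((t + c) * x - c * x)" by (simp add: algebra_simps)
    then show ?thesis unfolding g_def cos_diff by (simp add: algebra_simps)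
  qed
  ultimately show ?thesis by simp
qed

lemma H_eq_sinc_sq_shifts:
  assumes "a \<noteq> 0"
  shows "H a t = a / 2 * (Defs.sinc (a * t / 2))\<^sup>2
    + a / 4 * ((Defs.sinc (a * (t - pi / a) / 2))\<^sup>2 + (Defs.sinc (a * (t + pi / a) / 2))\<^sup>2)"
  using assms by (simp add: H_def right_diff_distrib distrib_left)

lemma H_minus [simp]: "H a (- t) = H a t"
proof -
  have "(a * - t - pi) / 2 = - ((a * t + pi) / 2)" "(a * - t + pi) / 2 = - ((a * t - pi) / 2)"
    by (simp_all add: field_simps)
  then show ?thesis unfolding H_def by (simp only: sinc_minus) simp
qed

lemma has_integral_H_cos:
  assumes "a \<noteq> 0"
  shows "((\<lambda>t. H a t * cos (t * x)) has_integral a / 4 * (1 + cos (pi * x / a)) * tent a x) {0..}"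
proof -
  have "has_bochner_integral lborel
      (\<lambda>t. a / 2 * ((Defs.sinc (a * t / 2))\<^sup>2 * cos (t * x))
        + a / 4 * ((Defs.sinc (a * (t + - (pi / a)) / 2))\<^sup>2 * cos (t * x)
          + (Defs.sinc (a * (t + pi / a) / 2))\<^sup>2 * cos (t * x)))
      (a / 2 * tent a x + a / 4 * (cos (- (pi / a) * x) * tent a x
        + cos (pi / a * x) * tent a x))"
    by (intro has_bochner_integral_add has_bochner_integral_mult_right
        has_bochner_integral_sinc_sq_cos has_bochner_integral_sinc_sq_shift_cos assms)
  then have "has_bochner_integral lborel (\<lambda>t. H a t * cos (t * x))
      (a / 2 * (1 + cos (pi * x / a)) * tent a x)"
    using assms by (simp add: H_eq_sinc_sq_shifts algebra_simps)
  then have "((\<lambda>t. H a t * cos (t * x)) has_integral a / 2 * (1 + cos (pi * x / a)) * tent a x / 2) {0..}"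
    by (rule has_integral_halfline_even[rotated]) simp
  then show ?thesis by simp
qed

theorem lemmaA2:
  fixes \<alpha> :: real
  assumes "\<alpha> > 0"
  shows "(\<forall>x\<ge>0. (\<lambda>t. H \<alpha> t * cos (t * x)) integrable_on {0..})
    \<and> (\<forall>x. x \<ge> 0 \<and> x > \<alpha> \<longrightarrow> G \<alpha> x = 0)
    \<and> G \<alpha> 0 = 1
    \<and> (\<forall>t::real. H \<alpha> t \<ge> 2 * \<alpha> / max ((\<alpha> * t)\<^sup>2) (pi\<^sup>2 / 3))"
proof (intro conjI allI impI)
  fix x :: real
  show "(\<lambda>t. H \<alpha> t * cos (t * x)) integrable_on {0..}"
    using has_integral_H_cos[of \<alpha> x] assms by blast
next
  fix x :: real
  assume "0 \<le> x \<and> \<alpha> < x"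
  then have "tent \<alpha> x = 0" using assms by (intro tent_eq_0) auto
  then show "G \<alpha> x = 0"
    using has_integral_H_cos[of \<alpha> x] assms by (simp add: G_def integral_unique)
next
  have "integral {0..} (\<lambda>t. H \<alpha> t * cos (t * 0)) = pi"
    using has_integral_H_cos[of \<alpha> 0] assms by (simp add: tent_at_0 integral_unique)
  then show "G \<alpha> 0 = 1" by (simp add: G_def)
next
  fix t :: real
  show "H \<alpha> t \<ge> 2 * \<alpha> / max ((\<alpha> * t)\<^sup>2) (pi\<^sup>2 / 3)"
    using assms by (rule H_lower_bound)
qed

end
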